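(* Let $f,g:\mathbb{R}^2\to\mathbb{R}$ be Lipschitz continuous. Let $(J_1,W_1)$ and $(J_2,W_2)$ be graphons, with $J_i=(\Omega_i,\mathcal A_i,\mu_i)$. Suppose that $\varphi:J_1\to J_2$ is measure preserving and that $W_1(x,y)=W_2(\varphi(x),\varphi(y))$ for almost every $(x,y)\in\Omega_1\times\Omega_1$. Then \[ \varphi^*:L^1(J_2)\to L^1(J_1),\qquad (\varphi^*v)_x=v_{\varphi(x)}, \] is an isometry which maps solutions of the graphon dynamical system $\mathcal D(J_2,W_2)$ to solutions of the graphon dynamical system $\mathcal D(J_1,W_1)$.
   Context: A graphon $(J,W)$ consists of a probability space $J=(\Omega,\mathcal A,\mu)$ and a symmetric measurable $W:\Omega\times\Omega\to[0,1]$. The graphon dynamical system $\mathcal D(J,W)$ is the flow on $L^1(J)$ given by \[ \dot u_x=f\Big(u_x,\int_J W(x,y)\,g(u_x,u_y)\,d\mu(y)\Big), \] where for each $t$ the equation holds for almost every $x$. A measurable map $\varphi:J_1\to J_2$ is measure preserving if $\mu_1(\varphi^{-1}(A))=\mu_2(A)$ for all $A\in\mathcal A_2$ (it need not be invertible). *)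

theory Defs
  imports "HOL-Probability.Probability"
begin

definition graphon :: "'a measure \<Rightarrow> ('a \<Rightarrow> 'a \<Rightarrow> real) \<Rightarrow> bool" where
  "graphon M W \<longleftrightarrow> prob_space M \<and>
     (\<lambda>(x, y). W x y) \<in> borel_measurable (M \<Otimes>\<^sub>M M) \<and>
     (\<forall>x\<in>space M. \<forall>y\<in>space M. W x y = W y x \<and> 0 \<le> W x y \<and> W x y \<le> 1)"

definition measure_pres :: "'a measure \<Rightarrow> 'b measure \<Rightarrow> ('a \<Rightarrow> 'b) \<Rightarrow> bool" where
  "measure_pres M1 M2 \<phi> \<longleftrightarrow> \<phi> \<in> measurable M1 M2 \<and>
     (\<forall>A\<in>sets M2. emeasure M1 (\<phi> -` A \<inter> space M1) = emeasure M2 A)"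

definition L1_norm :: "'a measure \<Rightarrow> ('a \<Rightarrow> real) \<Rightarrow> real" where
  "L1_norm M v = (\<integral>x. \<bar>v x\<bar> \<partial>M)"

definition gds_rhs :: "'a measure \<Rightarrow> ('a \<Rightarrow> 'a \<Rightarrow> real) \<Rightarrow> (real \<times> real \<Rightarrow> real)
    \<Rightarrow> (real \<times> real \<Rightarrow> real) \<Rightarrow> ('a \<Rightarrow> real) \<Rightarrow> 'a \<Rightarrow> real" where
  "gds_rhs M W f g v = (\<lambda>x. f (v x, \<integral>y. W x y * g (v x, v y) \<partial>M))"

definition L1_has_deriv :: "'a measure \<Rightarrow> (real \<Rightarrow> 'a \<Rightarrow> real) \<Rightarrow> ('a \<Rightarrow> real)
    \<Rightarrow> real \<Rightarrow> real set \<Rightarrow> bool" where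
  "L1_has_deriv M u u' t I \<longleftrightarrow>
     ((\<lambda>s. L1_norm M (\<lambda>x. u s x - u t x - (s - t) * u' x) / \<bar>s - t\<bar>) \<longlongrightarrow> 0) (at t within I)"

text \<open>u is a solution on the time set I of the graphon dynamical system D(M,W):
  a curve in L^1(M) which is differentiable (in L^1) with derivative equal to the
  right-hand side (as an element of L^1, i.e. the equation holds a.e. in x).\<close>
definition gds_solution :: "'a measure \<Rightarrow> ('a \<Rightarrow> 'a \<Rightarrow> real) \<Rightarrow> (real \<times> real \<Rightarrow> real)
    \<Rightarrow> (real \<times> real \<Rightarrow> real) \<Rightarrow> real set \<Rightarrow> (real \<Rightarrow> 'a \<Rightarrow> real) \<Rightarrow> bool" where
  "gds_solution M W f g I u \<longleftrightarrow>
     (\<forall>t\<in>I. integrable M (u t) \<and> integrable M (gds_rhs M W f g (u t)) \<and>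
        L1_has_deriv M u (gds_rhs M W f g (u t)) t I)"

end

theory Submission
  imports Defs
begin

(* A measure preserving map pushes mu1 forward to mu2, so integrals, and in particular
   L1 norms, are invariant under pullback by phi. Since W1 = W2 o (phi x phi) almost
   everywhere, the interaction integral of D(J1,W1) at v o phi is the pullback of that of
   D(J2,W2) at v, so the right-hand sides agree almost everywhere after pullback. Hence the
   L1 difference quotients of a curve u and of its pullback coincide, and derivatives
   transfer. *)

lemma lipschitz_on_UNIV_borel_measurable:
  assumes "C-lipschitz_on UNIV f"
  shows "f \<in> borel_measurable borel"
  using assms by (intro borel_measurable_continuous_onI lipschitz_on_continuous_on)

lemma measure_pres_measurable:
  "measure_pres M1 M2 \<phi> \<Longrightarrow> \<phi> \<in> measurable M1 M2"
  by (simp add: measure_pres_def)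

lemma measure_pres_distr_eq:
  assumes "measure_pres M1 M2 \<phi>"
  shows "distr M1 M2 \<phi> = M2"
  by (rule measure_eqI) (use assms in \<open>auto simp: measure_pres_def emeasure_distr\<close>)

lemma measure_pres_integrable_iff:
  fixes h :: "'b \<Rightarrow> 'c::{banach, second_countable_topology}"
  assumes "measure_pres M1 M2 \<phi>" and "h \<in> borel_measurable M2"
  shows "integrable M1 (\<lambda>x. h (\<phi> x)) \<longleftrightarrow> integrable M2 h"
  using integrable_distr_eq[OF measure_pres_measurable[OF assms(1)] assms(2)]
  by (simp add: measure_pres_distr_eq[OF assms(1)])

lemma measure_pres_integral_eq:
  fixes h :: "'b \<Rightarrow> 'c::{banach, second_countable_topology}"
  assumes "measure_pres M1 M2 \<phi>" and "h \<in> borel_measurable M2"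
  shows "(\<integral>x. h (\<phi> x) \<partial>M1) = (\<integral>z. h z \<partial>M2)"
  using integral_distr[OF measure_pres_measurable[OF assms(1)] assms(2)]
  by (simp add: measure_pres_distr_eq[OF assms(1)])

lemma measure_pres_L1_norm_eq:
  assumes \<phi>: "measure_pres M1 M2 \<phi>" and [measurable]: "v \<in> borel_measurable M2"
  shows "L1_norm M1 (\<lambda>x. v (\<phi> x)) = L1_norm M2 v"
  unfolding L1_norm_def by (rule measure_pres_integral_eq[OF \<phi>]) measurable

lemma measure_pres_L1_has_deriv:
  assumes \<phi>: "measure_pres M1 M2 \<phi>"
    and [measurable]: "\<And>s. s \<in> I \<Longrightarrow> u s \<in> borel_measurable M2" "u' \<in> borel_measurable M2"
    and [measurable]: "w \<in> borel_measurable M1"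
    and w: "AE x in M1. w x = u' (\<phi> x)"
    and "t \<in> I" and "L1_has_deriv M2 u u' t I"
  shows "L1_has_deriv M1 (\<lambda>s x. u s (\<phi> x)) w t I"
proof -
  have [measurable]: "\<phi> \<in> measurable M1 M2"
    by (rule measure_pres_measurable[OF \<phi>])
  have quotient_eq: "L1_norm M1 (\<lambda>x. u s (\<phi> x) - u t (\<phi> x) - (s - t) * w x)
      = L1_norm M2 (\<lambda>z. u s z - u t z - (s - t) * u' z)" if [measurable]: "s \<in> I" for s
  proof -
    have [measurable]: "u t \<in> borel_measurable M2"
      using \<open>t \<in> I\<close> by measurable
    have "L1_norm M1 (\<lambda>x. u s (\<phi> x) - u t (\<phi> x) - (s - t) * w x)
        = L1_norm M1 (\<lambda>x. u s (\<phi> x) - u t (\<phi> x) - (s - t) * u' (\<phi> x))"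
      unfolding L1_norm_def by (rule integral_cong_AE) (use w in \<open>measurable, auto\<close>)
    also have "\<dots> = L1_norm M2 (\<lambda>z. u s z - u t z - (s - t) * u' z)"
      by (rule measure_pres_L1_norm_eq[OF \<phi>]) measurable
    finally show ?thesis .
  qed
  show ?thesis
    using assms(7) unfolding L1_has_deriv_def
    by (rule tendsto_cong[THEN iffD1, rotated])
      (auto simp: eventually_at_filter quotient_eq intro!: eventuallyI)
qed

lemma gds_rhs_pullback_measurable:
  assumes "sigma_finite_measure M1" and \<phi>: "measure_pres M1 M2 \<phi>"
    and [measurable]: "(\<lambda>(x, y). W1 x y) \<in> borel_measurable (M1 \<Otimes>\<^sub>M M1)"
      "f \<in> borel_measurable borel" "g \<in> borel_measurable borel" "v \<in> borel_measurable M2"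
  shows "gds_rhs M1 W1 f g (\<lambda>x. v (\<phi> x)) \<in> borel_measurable M1"
proof -
  interpret sigma_finite_measure M1
    by (rule assms(1))
  have [measurable]: "\<phi> \<in> measurable M1 M2"
    by (rule measure_pres_measurable[OF \<phi>])
  show ?thesis
    unfolding gds_rhs_def by measurable
qed

lemma gds_rhs_pullback_AE:
  assumes "sigma_finite_measure M1" and \<phi>: "measure_pres M1 M2 \<phi>"
    and [measurable]: "(\<lambda>(x, y). W1 x y) \<in> borel_measurable (M1 \<Otimes>\<^sub>M M1)"
      "(\<lambda>(x, y). W2 x y) \<in> borel_measurable (M2 \<Otimes>\<^sub>M M2)"
      "g \<in> borel_measurable borel" "v \<in> borel_measurable M2"
    and W: "AE p in M1 \<Otimes>\<^sub>M M1. W1 (fst p) (snd p) = W2 (\<phi> (fst p)) (\<phi> (snd p))"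
  shows "AE x in M1. gds_rhs M1 W1 f g (\<lambda>x. v (\<phi> x)) x = gds_rhs M2 W2 f g v (\<phi> x)"
proof -
  interpret pair_sigma_finite M1 M1
    using assms(1) by (simp add: pair_sigma_finite_def)
  have \<phi>_meas[measurable]: "\<phi> \<in> measurable M1 M2"
    by (rule measure_pres_measurable[OF \<phi>])
  have "AE x in M1. AE y in M1. W1 x y = W2 (\<phi> x) (\<phi> y)"
    using AE_pair[OF W] by simp
  with AE_space show ?thesis
  proof eventually_elim
    case (elim x)
    have [measurable]: "\<phi> x \<in> space M2"
      using measurable_space[OF \<phi>_meas elim(1)] .
    have "(\<integral>y. W1 x y * g (v (\<phi> x), v (\<phi> y)) \<partial>M1)
        = (\<integral>y. W2 (\<phi> x) (\<phi> y) * g (v (\<phi> x), v (\<phi> y)) \<partial>M1)"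
      by (rule integral_cong_AE) (use elim in \<open>measurable, auto\<close>)
    also have "\<dots> = (\<integral>z. W2 (\<phi> x) z * g (v (\<phi> x), v z) \<partial>M2)"
      by (rule measure_pres_integral_eq[OF \<phi>]) measurable
    finally show ?case
      by (simp add: gds_rhs_def)
  qed
qed

lemma gds_solution_pullback:
  assumes "sigma_finite_measure M1" and \<phi>: "measure_pres M1 M2 \<phi>"
    and [measurable]: "(\<lambda>(x, y). W1 x y) \<in> borel_measurable (M1 \<Otimes>\<^sub>M M1)"
      "(\<lambda>(x, y). W2 x y) \<in> borel_measurable (M2 \<Otimes>\<^sub>M M2)"
      "f \<in> borel_measurable borel" "g \<in> borel_measurable borel"
    and W: "AE p in M1 \<Otimes>\<^sub>M M1. W1 (fst p) (snd p) = W2 (\<phi> (fst p)) (\<phi> (snd p))"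
    and sol: "gds_solution M2 W2 f g I u"
  shows "gds_solution M1 W1 f g I (\<lambda>t x. u t (\<phi> x))"
  unfolding gds_solution_def
proof (intro ballI conjI)
  fix t assume "t \<in> I"
  have u_meas[measurable]: "u s \<in> borel_measurable M2" if "s \<in> I" for s
    using sol that by (auto simp: gds_solution_def)
  have rhs_int: "integrable M2 (gds_rhs M2 W2 f g (u t))"
    and deriv: "L1_has_deriv M2 u (gds_rhs M2 W2 f g (u t)) t I"
    using sol \<open>t \<in> I\<close> by (auto simp: gds_solution_def)
  have [measurable]: "u t \<in> borel_measurable M2" "gds_rhs M2 W2 f g (u t) \<in> borel_measurable M2"
    using \<open>t \<in> I\<close> rhs_int by auto
  have rhs_meas[measurable]: "gds_rhs M1 W1 f g (\<lambda>x. u t (\<phi> x)) \<in> borel_measurable M1"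
    by (rule gds_rhs_pullback_measurable[OF assms(1-3,5,6)]) measurable
  have rhs_AE: "AE x in M1. gds_rhs M1 W1 f g (\<lambda>x. u t (\<phi> x)) x = gds_rhs M2 W2 f g (u t) (\<phi> x)"
    by (rule gds_rhs_pullback_AE[OF assms(1-4,6) _ W]) measurable
  show "integrable M1 (\<lambda>x. u t (\<phi> x))"
    using sol \<open>t \<in> I\<close> by (simp add: gds_solution_def measure_pres_integrable_iff[OF \<phi>])
  have "integrable M1 (\<lambda>x. gds_rhs M2 W2 f g (u t) (\<phi> x))"
    using rhs_int by (simp add: measure_pres_integrable_iff[OF \<phi>])
  then show "integrable M1 (gds_rhs M1 W1 f g (\<lambda>x. u t (\<phi> x)))"
    by (rule integrable_cong_AE_imp) (use rhs_AE in \<open>auto elim: AE_mp\<close>)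
  show "L1_has_deriv M1 (\<lambda>t x. u t (\<phi> x)) (gds_rhs M1 W1 f g (\<lambda>x. u t (\<phi> x))) t I"
    by (rule measure_pres_L1_has_deriv[OF \<phi> u_meas _ rhs_meas rhs_AE \<open>t \<in> I\<close> deriv]) measurable
qed

theorem theorem3p12:
  fixes f g :: "real \<times> real \<Rightarrow> real"
    and M1 :: "'a measure" and W1 :: "'a \<Rightarrow> 'a \<Rightarrow> real"
    and M2 :: "'b measure" and W2 :: "'b \<Rightarrow> 'b \<Rightarrow> real"
    and \<phi> :: "'a \<Rightarrow> 'b"
  assumes "\<exists>C. C-lipschitz_on UNIV f"
    and "\<exists>C. C-lipschitz_on UNIV g"
    and "graphon M1 W1" and "graphon M2 W2"
    and "measure_pres M1 M2 \<phi>"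
    and "AE p in M1 \<Otimes>\<^sub>M M1. W1 (fst p) (snd p) = W2 (\<phi> (fst p)) (\<phi> (snd p))"
  shows "(\<forall>v. integrable M2 v \<longrightarrow>
            integrable M1 (\<lambda>x. v (\<phi> x)) \<and> L1_norm M1 (\<lambda>x. v (\<phi> x)) = L1_norm M2 v)
       \<and> (\<forall>I u. gds_solution M2 W2 f g I u \<longrightarrow>
            gds_solution M1 W1 f g I (\<lambda>t x. u t (\<phi> x)))"
proof (intro conjI allI impI)
  fix v :: "'b \<Rightarrow> real" assume "integrable M2 v"
  then have v_meas: "v \<in> borel_measurable M2"
    by (rule borel_measurable_integrable)
  show "integrable M1 (\<lambda>x. v (\<phi> x))"
    using \<open>integrable M2 v\<close> measure_pres_integrable_iff[OF assms(5) v_meas] by simp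
  show "L1_norm M1 (\<lambda>x. v (\<phi> x)) = L1_norm M2 v"
    by (rule measure_pres_L1_norm_eq[OF assms(5) v_meas])
next
  fix I u assume "gds_solution M2 W2 f g I u"
  moreover have "f \<in> borel_measurable borel" "g \<in> borel_measurable borel"
    using assms(1,2) lipschitz_on_UNIV_borel_measurable by blast+
  moreover have "sigma_finite_measure M1"
    using assms(3) prob_space_imp_sigma_finite by (auto simp: graphon_def)
  moreover have "(\<lambda>(x, y). W1 x y) \<in> borel_measurable (M1 \<Otimes>\<^sub>M M1)"
    and "(\<lambda>(x, y). W2 x y) \<in> borel_measurable (M2 \<Otimes>\<^sub>M M2)"
    using assms(3,4) by (simp_all add: graphon_def)
  ultimately show "gds_solution M1 W1 f g I (\<lambda>t x. u t (\<phi> x))"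
    using gds_solution_pullback assms(5,6) by blast
qed

end
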